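(* Let $R$ be a commutative Noetherian ring, $M$ a faithful primeful $R$-module having at least one prime submodule, $X=\mathrm{Spec}(M)$, $N$ an $R$-module, $K\le M$, and $U=X\setminus V(K)$. If the ideal $(K:M)$ contains an $N$-sequence of length $2$, then $\mathcal{A}(N,M)(U)\cong N$.
   Context: For a submodule $L$ of an $R$-module $M$, $(L:M)=\{r\in R\mid rM\subseteq L\}$. A submodule $P$ of $M$ is prime if $P\neq M$ and whenever $rm\in P$ ($r\in R$, $m\in M$) then $r\in (P:M)$ or $m\in P$. $\mathrm{Spec}(M)$ is the set of prime submodules. $M$ is faithful if $\mathrm{Ann}_R(M)=0$; primeful if $M=0$ or $\mathrm{Spec}(M)\to\mathrm{Spec}(R/\mathrm{Ann}(M))$, $P\mapsto(P:M)/\mathrm{Ann}(M)$, is surjective. For $L\le M$, $V(L)=\{P\in X\mid (P:M)\supseteq (L:M)\}$; these are the closed sets of the Zariski topology. For open $U\subseteq X$, $\mathrm{Supp}(U)=\{(P:M)\mid P\in U\}$. $\mathcal{A}(N,M)(U)$ is the $R$-module of families $(\gamma_{\mathfrak p})_{\mathfrak p\in\mathrm{Supp}(U)}\in\prod_{\mathfrak p\in\mathrm{Supp}(U)}N_{\mathfrak p}$ such that for each $Q\in U$ there exist an open neighbourhood $W\subseteq U$ of $Q$ and $s\in R$, $m\in N$ with $s\notin(P:M)$ and $\gamma_{(P:M)}=m/s$ for every $P\in W$. A sequence $a_1,\dots,a_n\in R$ is an $N$-sequence if $a_i$ is a non-zero-divisor on $N/(a_1,\dots,a_{i-1})N$ for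 each $i$ and $N/(a_1,\dots,a_n)N\neq0$. *)

theory Defs
  imports Main "HOL.Modules" "HOL-Library.FuncSet"
begin

section \<open>Ring-theoretic notions (R is the whole type 'r)\<close>

definition is_ideal :: "'r::comm_ring_1 set \<Rightarrow> bool" where
  "is_ideal I \<longleftrightarrow> module.subspace ((*) :: 'r \<Rightarrow> 'r \<Rightarrow> 'r) I"

definition is_prime_ideal :: "'r::comm_ring_1 set \<Rightarrow> bool" where
  "is_prime_ideal I \<longleftrightarrow> is_ideal I \<and> I \<noteq> UNIV \<and> (\<forall>a b. a * b \<in> I \<longrightarrow> a \<in> I \<or> b \<in> I)"

definition noetherian_ring :: "'r::comm_ring_1 itself \<Rightarrow> bool" where
  "noetherian_ring _ \<longleftrightarrow>
     (\<forall>I::'r set. is_ideal I \<longrightarrow> (\<exists>F. finite F \<and> I = module.span ((*) :: 'r \<Rightarrow> 'r \<Rightarrow> 'r) F))"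

section \<open>Module-theoretic notions (M is the whole type 'm with scalar multiplication sM)\<close>

definition colon :: "('r::comm_ring_1 \<Rightarrow> 'm::ab_group_add \<Rightarrow> 'm) \<Rightarrow> 'm set \<Rightarrow> 'r set" where
  "colon sM L = {r. \<forall>m. sM r m \<in> L}"

definition ann :: "('r::comm_ring_1 \<Rightarrow> 'm::ab_group_add \<Rightarrow> 'm) \<Rightarrow> 'r set" where
  "ann sM = {r. \<forall>m. sM r m = 0}"

definition faithful :: "('r::comm_ring_1 \<Rightarrow> 'm::ab_group_add \<Rightarrow> 'm) \<Rightarrow> bool" where
  "faithful sM \<longleftrightarrow> ann sM = {0}"

definition prime_submodule :: "('r::comm_ring_1 \<Rightarrow> 'm::ab_group_add \<Rightarrow> 'm) \<Rightarrow> 'm set \<Rightarrow> bool" where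
  "prime_submodule sM P \<longleftrightarrow> module.subspace sM P \<and> P \<noteq> UNIV \<and>
     (\<forall>r m. sM r m \<in> P \<longrightarrow> r \<in> colon sM P \<or> m \<in> P)"

definition mSpec :: "('r::comm_ring_1 \<Rightarrow> 'm::ab_group_add \<Rightarrow> 'm) \<Rightarrow> 'm set set" where
  "mSpec sM = {P. prime_submodule sM P}"

text \<open>Primeful: M = 0, or the map P \<mapsto> (P:M)/Ann(M) from Spec(M) to Spec(R/Ann(M)) is
  surjective; prime ideals of R/Ann(M) correspond to prime ideals of R containing Ann(M).\<close>
definition primeful :: "('r::comm_ring_1 \<Rightarrow> 'm::ab_group_add \<Rightarrow> 'm) \<Rightarrow> bool" where
  "primeful sM \<longleftrightarrow> (UNIV :: 'm set) = {0} \<or>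
     (\<forall>p. is_prime_ideal p \<and> ann sM \<subseteq> p \<longrightarrow> (\<exists>P\<in>mSpec sM. colon sM P = p))"

definition zV :: "('r::comm_ring_1 \<Rightarrow> 'm::ab_group_add \<Rightarrow> 'm) \<Rightarrow> 'm set \<Rightarrow> 'm set set" where
  "zV sM L = {P\<in>mSpec sM. colon sM L \<subseteq> colon sM P}"

definition zopen :: "('r::comm_ring_1 \<Rightarrow> 'm::ab_group_add \<Rightarrow> 'm) \<Rightarrow> 'm set set \<Rightarrow> bool" where
  "zopen sM U \<longleftrightarrow> (\<exists>L. module.subspace sM L \<and> U = mSpec sM - zV sM L)"

definition Supp :: "('r::comm_ring_1 \<Rightarrow> 'm::ab_group_add \<Rightarrow> 'm) \<Rightarrow> 'm set set \<Rightarrow> 'r set set" where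
  "Supp sM U = colon sM ` U"

section \<open>Localization N_p, represented by equivalence classes of pairs (n, s), s \<notin> p\<close>

definition frac :: "('r::comm_ring_1 \<Rightarrow> 'n::ab_group_add \<Rightarrow> 'n) \<Rightarrow> 'r set \<Rightarrow> 'n \<Rightarrow> 'r \<Rightarrow> ('n \<times> 'r) set" where
  "frac sN p n s = {(n', s'). s' \<notin> p \<and> (\<exists>u. u \<notin> p \<and> sN u (sN s' n - sN s n') = 0)}"

definition loc :: "('r::comm_ring_1 \<Rightarrow> 'n::ab_group_add \<Rightarrow> 'n) \<Rightarrow> 'r set \<Rightarrow> ('n \<times> 'r) set set" where
  "loc sN p = {frac sN p n s | n s. s \<notin> p}"

definition loc_add :: "('r::comm_ring_1 \<Rightarrow> 'n::ab_group_add \<Rightarrow> 'n) \<Rightarrow> 'r set \<Rightarrow>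
    ('n \<times> 'r) set \<Rightarrow> ('n \<times> 'r) set \<Rightarrow> ('n \<times> 'r) set" where
  "loc_add sN p c d = (THE e. \<exists>n s n' s'. s \<notin> p \<and> s' \<notin> p \<and> c = frac sN p n s \<and>
      d = frac sN p n' s' \<and> e = frac sN p (sN s' n + sN s n') (s * s'))"

definition loc_smult :: "('r::comm_ring_1 \<Rightarrow> 'n::ab_group_add \<Rightarrow> 'n) \<Rightarrow> 'r set \<Rightarrow>
    'r \<Rightarrow> ('n \<times> 'r) set \<Rightarrow> ('n \<times> 'r) set" where
  "loc_smult sN p r c = (THE e. \<exists>n s. s \<notin> p \<and> c = frac sN p n s \<and> e = frac sN p (sN r n) s)"

definition sections ::
  "('r::comm_ring_1 \<Rightarrow> 'm::ab_group_add \<Rightarrow> 'm) \<Rightarrow> ('r \<Rightarrow> 'n::ab_group_add \<Rightarrow> 'n) \<Rightarrow> 'm set set \<Rightarrow>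
   ('r set \<Rightarrow> ('n \<times> 'r) set) set" where
  "sections sM sN U = {\<gamma> \<in> (\<Pi>\<^sub>E p\<in>Supp sM U. loc sN p).
     \<forall>Q\<in>U. \<exists>W. zopen sM W \<and> W \<subseteq> U \<and> Q \<in> W \<and>
       (\<exists>s n. \<forall>P\<in>W. s \<notin> colon sM P \<and> \<gamma> (colon sM P) = frac sN (colon sM P) n s)}"

definition sec_add :: "('r::comm_ring_1 \<Rightarrow> 'm::ab_group_add \<Rightarrow> 'm) \<Rightarrow> ('r \<Rightarrow> 'n::ab_group_add \<Rightarrow> 'n) \<Rightarrow>
    'm set set \<Rightarrow> ('r set \<Rightarrow> ('n \<times> 'r) set) \<Rightarrow> ('r set \<Rightarrow> ('n \<times> 'r) set) \<Rightarrow> ('r set \<Rightarrow> ('n \<times> 'r) set)" where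
  "sec_add sM sN U \<gamma> \<delta> = (\<lambda>p. if p \<in> Supp sM U then loc_add sN p (\<gamma> p) (\<delta> p) else undefined)"

definition sec_smult :: "('r::comm_ring_1 \<Rightarrow> 'm::ab_group_add \<Rightarrow> 'm) \<Rightarrow> ('r \<Rightarrow> 'n::ab_group_add \<Rightarrow> 'n) \<Rightarrow>
    'm set set \<Rightarrow> 'r \<Rightarrow> ('r set \<Rightarrow> ('n \<times> 'r) set) \<Rightarrow> ('r set \<Rightarrow> ('n \<times> 'r) set)" where
  "sec_smult sM sN U r \<gamma> = (\<lambda>p. if p \<in> Supp sM U then loc_smult sN p r (\<gamma> p) else undefined)"

definition N_sequence2 :: "('r::comm_ring_1 \<Rightarrow> 'n::ab_group_add \<Rightarrow> 'n) \<Rightarrow> 'r \<Rightarrow> 'r \<Rightarrow> bool" where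
  "N_sequence2 sN a1 a2 \<longleftrightarrow>
     (\<forall>x. sN a1 x = 0 \<longrightarrow> x = 0) \<and>
     (\<forall>x. sN a2 x \<in> range (sN a1) \<longrightarrow> x \<in> range (sN a1)) \<and>
     {sN a1 x + sN a2 y | x y. True} \<noteq> UNIV"

end

theory Submission
  imports Defs
begin

(* Since M is faithful and primeful, P |-> (P:M) maps U = X - V(K) onto the primes p with
   (K:M) not contained in p, so a section over U is a family of germs in the N_p that is locally
   a fraction m/f on basic open sets D(f) of Spec R; moreover D(a) lies in this support for
   every a in (K:M). Each D(d) is quasi-compact, so finitely many local representatives cover
   it, and after raising their denominators to a common power they glue to one fraction x/d^e
   on D(d). Comparing the representatives x/a1^k and y/a2^l on D(a1 a2), the N-sequence
   conditions force x in a1^k N, so the section is z/1 on D(a1) and, as a1 is N-regular, on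
   all of U. Regularity of a1 also makes z |-> z/1 injective. *)

lemma (in module) subspace_Union_chain:
  assumes "C \<noteq> {}" and "\<And>Q. Q \<in> C \<Longrightarrow> subspace Q"
    and "\<And>X Y. X \<in> C \<Longrightarrow> Y \<in> C \<Longrightarrow> X \<subseteq> Y \<or> Y \<subseteq> X"
  shows "subspace (\<Union>C)"
  unfolding subspace_def
proof (intro conjI ballI allI)
  obtain Q where "Q \<in> C" using assms(1) by blast
  then show "0 \<in> \<Union>C" using assms(2) subspace_0 by blast
next
  fix x y assume "x \<in> \<Union>C" "y \<in> \<Union>C"
  then obtain X Y where XY: "X \<in> C" "Y \<in> C" and "x \<in> X" "y \<in> Y" by blast
  then have "x + y \<in> X \<or> x + y \<in> Y"
    using assms(3)[OF XY] subspace_add[OF assms(2)[OF XY(1)]] subspace_add[OF assms(2)[OF XY(2)]]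
    by blast
  then show "x + y \<in> \<Union>C" using XY by blast
next
  fix c x assume "x \<in> \<Union>C"
  then show "c *s x \<in> \<Union>C" using assms(2) subspace_scale by blast
qed

lemma (in module) span_image_sum:
  assumes "finite t" and "x \<in> span (g ` t)"
  shows "\<exists>r. x = (\<Sum>i\<in>t. r i *s g i)"
  using assms(2)
proof (induction rule: span_induct_alt)
  case base
  show ?case by (intro exI[of _ "\<lambda>_. 0"]) simp
next
  case (step c v w)
  then obtain i0 r where i0: "i0 \<in> t" "v = g i0" and w: "w = (\<Sum>i\<in>t. r i *s g i)" by blast
  have "(\<Sum>i\<in>t. (if i = i0 then c else 0) *s g i) = (\<Sum>i\<in>t. if i = i0 then c *s g i0 else 0)"
    by (rule sum.cong) auto
  then have sum_eq: "c *s v + w = (\<Sum>i\<in>t. (r i + (if i = i0 then c else 0)) *s g i)"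
    using assms(1) i0 by (simp add: w scale_left_distrib sum.distrib)
  show ?case by (rule exI[of _ "\<lambda>i. r i + (if i = i0 then c else 0)"]) (fact sum_eq)
qed

interpretation Rm: module "(*) :: 'a::comm_ring_1 \<Rightarrow> 'a \<Rightarrow> 'a"
  by standard (auto simp: algebra_simps)

(* Rm.scale_scale reverses mult.assoc and would make simp loop with mult_ac. *)
declare Rm.scale_scale [simp del]

lemma prime_ideal_subspace: "is_prime_ideal p \<Longrightarrow> Rm.subspace p"
  unfolding is_prime_ideal_def is_ideal_def by blast

lemma prime_ideal_one_notin: "is_prime_ideal p \<Longrightarrow> 1 \<notin> p"
  unfolding is_prime_ideal_def is_ideal_def by (metis Rm.subspace_scale UNIV_eq_I mult_1_right)

lemma prime_ideal_mult_iff: "is_prime_ideal p \<Longrightarrow> x * y \<in> p \<longleftrightarrow> x \<in> p \<or> y \<in> p"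
proof
  assume p: "is_prime_ideal p"
  show "x * y \<in> p \<Longrightarrow> x \<in> p \<or> y \<in> p" using p unfolding is_prime_ideal_def by blast
  show "x \<in> p \<or> y \<in> p \<Longrightarrow> x * y \<in> p"
    using Rm.subspace_scale[OF prime_ideal_subspace[OF p]] by (metis mult.commute)
qed

lemma prime_ideal_power_iff: "is_prime_ideal p \<Longrightarrow> x ^ n \<in> p \<longleftrightarrow> x \<in> p \<and> n \<noteq> 0"
  by (induct n) (auto simp: prime_ideal_mult_iff prime_ideal_one_notin)

lemma prime_ideal_sum_notin:
  assumes "is_prime_ideal p" and "(\<Sum>i\<in>t. r i * g i) \<notin> p"
  obtains i where "i \<in> t" and "g i \<notin> p"
proof -
  have "(\<Sum>i\<in>t. r i * g i) \<in> p" if "\<forall>i\<in>t. g i \<in> p"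
    using that by (intro Rm.subspace_sum[OF prime_ideal_subspace[OF assms(1)]])
      (simp add: prime_ideal_mult_iff[OF assms(1)])
  then show ?thesis using assms(2) that by blast
qed

lemma prime_ideal_avoiding_powers:
  fixes a :: "'a::comm_ring_1"
  assumes "is_ideal J" and "\<And>n. a ^ n \<notin> J"
  obtains q where "is_prime_ideal q" and "J \<subseteq> q" and "a \<notin> q"
proof -
  let ?A = "{Q. Rm.subspace Q \<and> J \<subseteq> Q \<and> (\<forall>n. a ^ n \<notin> Q)}"
  have "\<exists>Q\<in>?A. \<forall>X\<in>?A. Q \<subseteq> X \<longrightarrow> X = Q"
  proof (rule subset_Zorn_nonempty)
    show "?A \<noteq> {}" using assms unfolding is_ideal_def by blast
    fix C assume C: "C \<noteq> {}" "subset.chain ?A C"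
    then have "Rm.subspace (\<Union>C)"
      by (intro Rm.subspace_Union_chain) (auto simp: subset_chain_def)
    moreover have "J \<subseteq> \<Union>C" using C unfolding subset_chain_def by blast
    moreover have "a ^ n \<notin> \<Union>C" for n using C unfolding subset_chain_def by blast
    ultimately show "\<Union>C \<in> ?A" by blast
  qed
  then obtain Q where Q: "Q \<in> ?A" and max: "\<forall>X\<in>?A. Q \<subseteq> X \<longrightarrow> X = Q" ..
  have Q_sub: "Rm.subspace Q" and Q_pow: "\<And>n. a ^ n \<notin> Q" using Q by simp_all
  have extend: "\<exists>n k. a ^ n - k * x \<in> Q" if "x \<notin> Q" for x
  proof -
    let ?Q' = "Rm.span (insert x Q)"
    have "insert x Q \<subseteq> ?Q'" by (rule Rm.span_superset)
    then have "Q \<subseteq> ?Q'" "x \<in> ?Q'" by simp_all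
    then have "?Q' \<noteq> Q" using that by blast
    then have "?Q' \<notin> ?A" using max \<open>Q \<subseteq> ?Q'\<close> by auto
    moreover have "J \<subseteq> ?Q'" using Q \<open>Q \<subseteq> ?Q'\<close> by blast
    ultimately obtain n where "a ^ n \<in> ?Q'" by blast
    moreover have "Rm.span Q = Q" using Q_sub by simp
    ultimately show ?thesis by (auto simp: Rm.span_breakdown_eq)
  qed
  have "is_prime_ideal Q"
    unfolding is_prime_ideal_def is_ideal_def
  proof (intro conjI allI impI Q_sub)
    show "Q \<noteq> UNIV" using Q_pow by blast
    fix x y assume xy: "x * y \<in> Q"
    show "x \<in> Q \<or> y \<in> Q"
    proof (rule ccontr)
      assume "\<not> (x \<in> Q \<or> y \<in> Q)"
      then obtain n k m l where n: "a ^ n - k * x \<in> Q" and m: "a ^ m - l * y \<in> Q"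
        using extend by blast
      have "a ^ (n + m) = (a ^ n - k * x) * a ^ m + (k * x) * (a ^ m - l * y) + (k * l) * (x * y)"
        by (simp add: power_add algebra_simps)
      also have "\<dots> \<in> Q"
        using Rm.subspace_add[OF Q_sub] Rm.subspace_scale[OF Q_sub] n m xy
        by (simp add: mult.commute[of _ "a ^ m"])
      finally show False using Q_pow by blast
    qed
  qed
  moreover have "J \<subseteq> Q" using Q by simp
  moreover have "a \<notin> Q" using Q_pow[of 1] by simp
  ultimately show ?thesis by (rule that)
qed

lemma ideal_contains_power:
  assumes "is_ideal J" and "\<And>q. is_prime_ideal q \<Longrightarrow> a \<notin> q \<Longrightarrow> \<not> J \<subseteq> q"
  obtains n where "a ^ n \<in> J"
  using prime_ideal_avoiding_powers[OF assms(1)] assms(2) by blast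

lemma basic_open_finite_subcover:
  assumes "\<And>q. is_prime_ideal q \<Longrightarrow> d \<notin> q \<Longrightarrow> \<exists>f\<in>F. f \<notin> q"
  obtains t where "finite t" and "t \<subseteq> F"
    and "\<forall>q. is_prime_ideal q \<and> d \<notin> q \<longrightarrow> (\<exists>f\<in>t. f \<notin> q)"
proof -
  have "is_ideal (Rm.span F)" by (simp add: is_ideal_def Rm.subspace_span)
  moreover have "\<not> Rm.span F \<subseteq> q" if "is_prime_ideal q" "d \<notin> q" for q
    using assms[OF that] Rm.span_superset[of F] by blast
  ultimately obtain e where "d ^ e \<in> Rm.span F" by (rule ideal_contains_power)
  then obtain t r where t: "finite t" "t \<subseteq> F" and de: "(\<Sum>f\<in>t. r f * f) = d ^ e"
    unfolding Rm.span_explicit mem_Collect_eq by (elim exE conjE) (rule that; simp)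
  have "\<exists>f\<in>t. f \<notin> q" if q: "is_prime_ideal q" "d \<notin> q" for q
  proof -
    have "(\<Sum>f\<in>t. r f * id f) \<notin> q" using de q by (simp add: prime_ideal_power_iff)
    then obtain f where "f \<in> t" "id f \<notin> q" by (rule prime_ideal_sum_notin[OF q(1)])
    then show ?thesis by auto
  qed
  then have "\<forall>q. is_prime_ideal q \<and> d \<notin> q \<longrightarrow> (\<exists>f\<in>t. f \<notin> q)" by blast
  with t show ?thesis by (rule that)
qed

context module
begin

lemma frac_mem_iff:
  "(n', s') \<in> frac scale p n s \<longleftrightarrow> s' \<notin> p \<and> (\<exists>u. u \<notin> p \<and> (u * s') *s n = (u * s) *s n')"
  by (simp add: frac_def scale_right_diff_distrib)

lemma frac_subset:
  assumes p: "is_prime_ideal p" and "s \<notin> p"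
    and u: "u \<notin> p" "(u * s') *s n = (u * s) *s n'"
  shows "frac scale p n s \<subseteq> frac scale p n' s'"
proof clarify
  fix m t assume "(m, t) \<in> frac scale p n s"
  then obtain v where t: "t \<notin> p" and v: "v \<notin> p" "(v * t) *s n = (v * s) *s m"
    by (auto simp: frac_mem_iff)
  have "(u * v * s * t) *s n' = (v * t) *s ((u * s) *s n')" by (simp add: mult_ac)
  also have "\<dots> = (v * t) *s ((u * s') *s n)" using u(2) by simp
  also have "\<dots> = (u * s') *s ((v * t) *s n)" by (simp add: mult_ac)
  also have "\<dots> = (u * s') *s ((v * s) *s m)" using v(2) by simp
  also have "\<dots> = (u * v * s * s') *s m" by (simp add: mult_ac)
  finally have "(u * v * s * t) *s n' = (u * v * s * s') *s m" .
  moreover have "u * v * s \<notin> p" using p u(1) v(1) \<open>s \<notin> p\<close> by (simp add: prime_ideal_mult_iff)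
  ultimately show "(m, t) \<in> frac scale p n' s'"
    using t by (auto simp: frac_mem_iff mult_ac)
qed

lemma frac_eq_iff:
  assumes p: "is_prime_ideal p" and s: "s \<notin> p" and s': "s' \<notin> p"
  shows "frac scale p n s = frac scale p n' s' \<longleftrightarrow> (\<exists>u. u \<notin> p \<and> (u * s') *s n = (u * s) *s n')"
proof
  assume eq: "frac scale p n s = frac scale p n' s'"
  have "(n', s') \<in> frac scale p n' s'"
    using s' prime_ideal_one_notin[OF p] by (auto simp: frac_mem_iff)
  then show "\<exists>u. u \<notin> p \<and> (u * s') *s n = (u * s) *s n'" by (simp add: eq[symmetric] frac_mem_iff)
next
  assume "\<exists>u. u \<notin> p \<and> (u * s') *s n = (u * s) *s n'"
  then obtain u where u: "u \<notin> p" "(u * s') *s n = (u * s) *s n'" by blast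
  show "frac scale p n s = frac scale p n' s'"
    using frac_subset[OF p s u] frac_subset[OF p s' u(1) u(2)[symmetric]] by (rule subset_antisym)
qed

lemma frac_eqI:
  assumes "is_prime_ideal p" "s \<notin> p" "s' \<notin> p" "u \<notin> p" "(u * s') *s n = (u * s) *s n'"
  shows "frac scale p n s = frac scale p n' s'"
  using assms frac_eq_iff by blast

definition frac_rep :: "('a set \<Rightarrow> ('b \<times> 'a) set) \<Rightarrow> 'a \<Rightarrow> 'b \<Rightarrow> bool" where
  "frac_rep \<gamma> f m \<longleftrightarrow> (\<forall>p. is_prime_ideal p \<and> f \<notin> p \<longrightarrow> \<gamma> p = frac scale p m f)"

definition locally_frac :: "'a set set \<Rightarrow> ('a set \<Rightarrow> ('b \<times> 'a) set) \<Rightarrow> bool" where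
  "locally_frac S \<gamma> \<longleftrightarrow> (\<forall>p\<in>S. \<exists>f m. f \<notin> p \<and> frac_rep \<gamma> f m)"

lemma frac_repD: "frac_rep \<gamma> f m \<Longrightarrow> is_prime_ideal p \<Longrightarrow> f \<notin> p \<Longrightarrow> \<gamma> p = frac scale p m f"
  unfolding frac_rep_def by blast

lemma power_annihilates_if_locally_zero:
  assumes "\<And>q. is_prime_ideal q \<Longrightarrow> f \<notin> q \<Longrightarrow> \<exists>u. u \<notin> q \<and> u *s w = 0"
  obtains t where "f ^ t *s w = 0"
proof -
  have "is_ideal {u. u *s w = 0}"
    unfolding is_ideal_def Rm.subspace_def by (auto simp: scale_left_distrib simp flip: scale_scale)
  moreover have "\<not> {u. u *s w = 0} \<subseteq> q" if "is_prime_ideal q" "f \<notin> q" for q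
    using assms[OF that] by blast
  ultimately obtain t where "f ^ t \<in> {u. u *s w = 0}" by (rule ideal_contains_power)
  then show ?thesis using that by simp
qed

lemma frac_rep_compatible:
  assumes "frac_rep \<gamma> f m" and "frac_rep \<gamma> g n"
  obtains k where "(f * g) ^ k *s (g *s m - f *s n) = 0"
proof (rule power_annihilates_if_locally_zero)
  fix q assume q: "is_prime_ideal q" "f * g \<notin> q"
  then have f: "f \<notin> q" and g: "g \<notin> q" by (simp_all add: prime_ideal_mult_iff)
  have "frac scale q m f = frac scale q n g"
    using frac_repD[OF assms(1) q(1) f] frac_repD[OF assms(2) q(1) g] by simp
  then obtain u where "u \<notin> q" "(u * g) *s m = (u * f) *s n" using frac_eq_iff[OF q(1) f g] by blast
  then show "\<exists>u. u \<notin> q \<and> u *s (g *s m - f *s n) = 0"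
    by (auto simp: scale_right_diff_distrib)
qed

lemma frac_rep_mult:
  assumes "frac_rep \<gamma> f m"
  shows "frac_rep \<gamma> (c * f) (c *s m)"
  unfolding frac_rep_def
proof (intro allI impI, elim conjE)
  fix p assume p: "is_prime_ideal p" and cf: "c * f \<notin> p"
  then have f: "f \<notin> p" by (simp add: prime_ideal_mult_iff)
  have "frac scale p m f = frac scale p (c *s m) (c * f)"
    using p f cf prime_ideal_one_notin[OF p] by (intro frac_eqI[where u = 1]) (simp_all add: mult_ac)
  then show "\<gamma> p = frac scale p (c *s m) (c * f)" using frac_repD[OF assms p f] by simp
qed

lemma frac_rep_common_exponent:
  assumes "finite t" and "\<And>f. f \<in> t \<Longrightarrow> frac_rep \<gamma> f (m f)"
  obtains K where "\<forall>f\<in>t. \<forall>g\<in>t. (f * g) ^ K *s (g *s m f - f *s m g) = 0"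
proof -
  have "\<exists>k. (f * g) ^ k *s (g *s m f - f *s m g) = 0" if "f \<in> t" "g \<in> t" for f g
    using frac_rep_compatible[OF assms(2)[OF that(1)] assms(2)[OF that(2)]] by blast
  then obtain k where k: "\<And>f g. f \<in> t \<Longrightarrow> g \<in> t \<Longrightarrow> (f * g) ^ k f g *s (g *s m f - f *s m g) = 0"
    by metis
  define K where "K = Max ((\<lambda>(f, g). k f g) ` (t \<times> t))"
  have "(f * g) ^ K *s (g *s m f - f *s m g) = 0" if fg: "f \<in> t" "g \<in> t" for f g
  proof -
    have "k f g \<le> K" unfolding K_def using assms(1) fg by (intro Max_ge) auto
    then have "(f * g) ^ K = (f * g) ^ (K - k f g) * (f * g) ^ k f g"
      by (simp flip: power_add)
    then show ?thesis using k[OF fg] by (simp flip: scale_scale)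
  qed
  then show ?thesis using that by blast
qed

lemma frac_rep_glue:
  assumes "finite t" and "\<And>i. i \<in> t \<Longrightarrow> frac_rep \<gamma> (g i) (h i)"
    and "\<And>i j. i \<in> t \<Longrightarrow> j \<in> t \<Longrightarrow> g j *s h i = g i *s h j"
  shows "frac_rep \<gamma> (\<Sum>i\<in>t. r i * g i) (\<Sum>i\<in>t. r i *s h i)"
  unfolding frac_rep_def
proof (intro allI impI, elim conjE)
  fix p assume p: "is_prime_ideal p" and c: "(\<Sum>i\<in>t. r i * g i) \<notin> p"
  then obtain j where j: "j \<in> t" "g j \<notin> p" by (rule prime_ideal_sum_notin)
  have "(\<Sum>i\<in>t. r i * g i) *s h j = (\<Sum>i\<in>t. r i *s (g i *s h j))"
    by (simp add: scale_sum_left scale_scale)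
  also have "\<dots> = (\<Sum>i\<in>t. g j *s (r i *s h i))"
  proof (rule sum.cong)
    fix i assume "i \<in> t"
    then have "r i *s (g i *s h j) = r i *s (g j *s h i)" using assms(3)[OF _ j(1)] by simp
    then show "r i *s (g i *s h j) = g j *s (r i *s h i)" by (simp add: mult.commute)
  qed simp
  also have "\<dots> = g j *s (\<Sum>i\<in>t. r i *s h i)" by (simp add: scale_sum_right)
  finally have "frac scale p (h j) (g j) = frac scale p (\<Sum>i\<in>t. r i *s h i) (\<Sum>i\<in>t. r i * g i)"
    using p j(2) c prime_ideal_one_notin[OF p] by (intro frac_eqI[where u = 1]) simp_all
  then show "\<gamma> p = frac scale p (\<Sum>i\<in>t. r i *s h i) (\<Sum>i\<in>t. r i * g i)"
    using frac_repD[OF assms(2)[OF j(1)] p j(2)] by simp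
qed

lemma locally_frac_on_basic_open:
  assumes "locally_frac S \<gamma>" and "\<And>q. is_prime_ideal q \<Longrightarrow> d \<notin> q \<Longrightarrow> q \<in> S"
  obtains e x where "frac_rep \<gamma> (d ^ e) x"
proof -
  have "\<exists>f\<in>{f. \<exists>m. frac_rep \<gamma> f m}. f \<notin> q" if "is_prime_ideal q" "d \<notin> q" for q
    using assms(1) assms(2)[OF that] unfolding locally_frac_def by blast
  then obtain t where t: "finite t" "t \<subseteq> {f. \<exists>m. frac_rep \<gamma> f m}"
    and cover: "\<forall>q. is_prime_ideal q \<and> d \<notin> q \<longrightarrow> (\<exists>f\<in>t. f \<notin> q)"
    by (rule basic_open_finite_subcover)
  have "\<forall>f\<in>t. \<exists>m. frac_rep \<gamma> f m" using t(2) by blast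
  then obtain m where "\<forall>f\<in>t. frac_rep \<gamma> f (m f)" by (rule bchoice[THEN exE])
  then have m: "\<And>f. f \<in> t \<Longrightarrow> frac_rep \<gamma> f (m f)" by blast
  obtain K where K: "\<forall>f\<in>t. \<forall>g\<in>t. (f * g) ^ K *s (g *s m f - f *s m g) = 0"
    by (rule frac_rep_common_exponent[OF t(1) m])
  define g where "g f = f ^ Suc K" for f :: 'a
  define h where "h f = f ^ K *s m f" for f
  have rep: "frac_rep \<gamma> (g f) (h f)" if "f \<in> t" for f
    using frac_rep_mult[OF m[OF that], of "f ^ K"] by (simp add: g_def h_def mult.commute)
  have cross: "g f' *s h f = g f *s h f'" if "f \<in> t" "f' \<in> t" for f f'
  proof -
    have "(f * f') ^ K *s (f' *s m f) = (f * f') ^ K *s (f *s m f')"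
      using K[rule_format, OF that] by (simp add: scale_right_diff_distrib)
    then show ?thesis by (simp add: g_def h_def power_mult_distrib scale_scale mult_ac)
  qed
  have "\<not> Rm.span (g ` t) \<subseteq> q" if q: "is_prime_ideal q" "d \<notin> q" for q
  proof -
    obtain f where f: "f \<in> t" "f \<notin> q" using cover q by blast
    then have "g f \<notin> q" using q(1) by (simp add: g_def prime_ideal_power_iff del: power_Suc)
    moreover have "g f \<in> Rm.span (g ` t)" using f(1) by (simp add: Rm.span_base)
    ultimately show ?thesis by blast
  qed
  moreover have "is_ideal (Rm.span (g ` t))" by (simp add: is_ideal_def Rm.subspace_span)
  ultimately obtain e where "d ^ e \<in> Rm.span (g ` t)" using ideal_contains_power by blast
  then obtain r where "d ^ e = (\<Sum>f\<in>t. r f * g f)" using Rm.span_image_sum[OF t(1)] by blast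
  then have "frac_rep \<gamma> (d ^ e) (\<Sum>f\<in>t. r f *s h f)" using frac_rep_glue[OF t(1) rep cross] by simp
  then show ?thesis by (rule that)
qed

lemma scale_power_eq_0_regular:
  assumes "\<And>x. a *s x = 0 \<Longrightarrow> x = 0" and "a ^ t *s x = 0"
  shows "x = 0"
  using assms(2)
proof (induction t arbitrary: x)
  case (Suc t)
  then have "a ^ t *s (a *s x) = 0" by (simp add: scale_scale mult.commute)
  then show ?case using Suc.IH assms(1) by blast
qed simp

lemma power_regular_mod:
  assumes "\<And>x. b *s x \<in> range (scale a) \<Longrightarrow> x \<in> range (scale a)"
    and "b ^ r *s x \<in> range (scale a)"
  shows "x \<in> range (scale a)"
  using assms(2)
proof (induction r arbitrary: x)
  case (Suc r)
  then have "b ^ r *s (b *s x) \<in> range (scale a)" by (simp add: scale_scale mult.commute)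
  then show ?case using Suc.IH assms(1) by blast
qed simp

lemma power_regular_mod_power:
  assumes a: "\<And>x. a *s x = 0 \<Longrightarrow> x = 0"
    and b: "\<And>x. b *s x \<in> range (scale a) \<Longrightarrow> x \<in> range (scale a)"
    and "b ^ r *s x \<in> range (scale (a ^ k))"
  shows "x \<in> range (scale (a ^ k))"
  using assms(3)
proof (induction k arbitrary: x)
  case (Suc k)
  then obtain w where w: "b ^ r *s x = a *s (a ^ k *s w)" by (auto simp flip: scale_scale)
  then have "x \<in> range (scale a)" using power_regular_mod[OF b] by (metis rangeI)
  then obtain x' where x': "x = a *s x'" by blast
  have "a *s (b ^ r *s x') = b ^ r *s x" by (simp add: x' scale_scale mult.commute)
  then have "a *s (b ^ r *s x' - a ^ k *s w) = 0" using w by (simp add: scale_right_diff_distrib)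
  then have "b ^ r *s x' \<in> range (scale (a ^ k))" using a by (metis eq_iff_diff_eq_0 rangeI)
  then obtain y where "x' = a ^ k *s y" using Suc.IH by blast
  then show ?case by (simp add: x' scale_scale)
qed simp

lemma frac_rep_numerator_divisible:
  assumes a: "\<And>x. a *s x = 0 \<Longrightarrow> x = 0"
    and b: "\<And>x. b *s x \<in> range (scale a) \<Longrightarrow> x \<in> range (scale a)"
    and "frac_rep \<gamma> (a ^ k) x" and "frac_rep \<gamma> (b ^ l) y"
  obtains z where "x = a ^ k *s z"
proof -
  obtain t where "(a ^ k * b ^ l) ^ t *s (b ^ l *s x - a ^ k *s y) = 0"
    by (rule frac_rep_compatible[OF assms(3,4)])
  then have "a ^ (k * t) *s (b ^ (l * t) *s (b ^ l *s x - a ^ k *s y)) = 0"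
    by (simp add: power_mult_distrib power_mult scale_scale)
  with a have "b ^ (l * t) *s (b ^ l *s x - a ^ k *s y) = 0" by (rule scale_power_eq_0_regular)
  then have "b ^ (l * t + l) *s x = a ^ k *s (b ^ (l * t) *s y)"
    by (simp add: scale_right_diff_distrib power_add scale_scale mult.commute)
  then have "x \<in> range (scale (a ^ k))" using power_regular_mod_power[OF a b] by (metis rangeI)
  then show ?thesis using that by blast
qed

lemma locally_frac_eq_frac1_of_rep:
  assumes a: "\<And>x. a *s x = 0 \<Longrightarrow> x = 0"
    and "locally_frac S \<gamma>" and "\<forall>p\<in>S. is_prime_ideal p"
    and "frac_rep \<gamma> (a ^ k) (a ^ k *s z)" and "p \<in> S"
  shows "\<gamma> p = frac scale p z 1"
proof -
  have p: "is_prime_ideal p" using assms(3,5) by blast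
  obtain f m where f: "f \<notin> p" and rep: "frac_rep \<gamma> f m"
    using assms(2,5) unfolding locally_frac_def by blast
  obtain t where "(f * a ^ k) ^ t *s (a ^ k *s m - f *s (a ^ k *s z)) = 0"
    by (rule frac_rep_compatible[OF rep assms(4)])
  then have "a ^ (k * t + k) *s (f ^ t *s (m - f *s z)) = 0"
    by (simp add: power_mult_distrib power_add power_mult scale_scale scale_right_diff_distrib mult_ac)
  with a have "f ^ t *s (m - f *s z) = 0" by (rule scale_power_eq_0_regular)
  then have "frac scale p m f = frac scale p z 1"
    using p f prime_ideal_one_notin[OF p]
    by (intro frac_eqI[where u = "f ^ t"]) (simp_all add: prime_ideal_power_iff scale_right_diff_distrib scale_scale)
  then show ?thesis using frac_repD[OF rep p f] by simp
qed

lemma locally_frac_eq_frac1_depth_two: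
  assumes a: "\<And>x. a *s x = 0 \<Longrightarrow> x = 0"
    and b: "\<And>x. b *s x \<in> range (scale a) \<Longrightarrow> x \<in> range (scale a)"
    and "locally_frac S \<gamma>" and "\<forall>p\<in>S. is_prime_ideal p"
    and "\<And>q. is_prime_ideal q \<Longrightarrow> a \<notin> q \<Longrightarrow> q \<in> S"
    and "\<And>q. is_prime_ideal q \<Longrightarrow> b \<notin> q \<Longrightarrow> q \<in> S"
  obtains z where "\<forall>p\<in>S. \<gamma> p = frac scale p z 1"
proof -
  obtain k x where x: "frac_rep \<gamma> (a ^ k) x" by (rule locally_frac_on_basic_open[OF assms(3,5)])
  obtain l y where y: "frac_rep \<gamma> (b ^ l) y" by (rule locally_frac_on_basic_open[OF assms(3,6)])
  obtain z where "x = a ^ k *s z" by (rule frac_rep_numerator_divisible[OF a b x y])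
  then have "\<forall>p\<in>S. \<gamma> p = frac scale p z 1" using locally_frac_eq_frac1_of_rep[OF a assms(3,4)] x by blast
  then show ?thesis by (rule that)
qed

lemma frac1_inj:
  assumes a: "\<And>x. a *s x = 0 \<Longrightarrow> x = 0"
    and "\<And>p. is_prime_ideal p \<Longrightarrow> a \<notin> p \<Longrightarrow> frac scale p x 1 = frac scale p y 1"
  shows "x = y"
proof -
  obtain t where "a ^ t *s (x - y) = 0"
  proof (rule power_annihilates_if_locally_zero)
    fix p assume p: "is_prime_ideal p" "a \<notin> p"
    have one: "1 \<notin> p" by (rule prime_ideal_one_notin[OF p(1)])
    have "frac scale p x 1 = frac scale p y 1" by (rule assms(2)[OF p])
    then obtain u where "u \<notin> p" "(u * 1) *s x = (u * 1) *s y"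
      unfolding frac_eq_iff[OF p(1) one one] by blast
    then show "\<exists>u. u \<notin> p \<and> u *s (x - y) = 0" by (auto simp: scale_right_diff_distrib)
  qed
  with a have "x - y = 0" by (rule scale_power_eq_0_regular)
  then show ?thesis by simp
qed

lemma loc_add_frac1:
  assumes p: "is_prime_ideal p"
  shows "loc_add scale p (frac scale p x 1) (frac scale p y 1) = frac scale p (x + y) 1"
  unfolding loc_add_def
proof (rule the_equality)
  show "\<exists>n s n' s'. s \<notin> p \<and> s' \<notin> p \<and> frac scale p x 1 = frac scale p n s \<and>
      frac scale p y 1 = frac scale p n' s' \<and>
      frac scale p (x + y) 1 = frac scale p (s' *s n + s *s n') (s * s')"
    using prime_ideal_one_notin[OF p] by (intro exI[of _ x] exI[of _ 1] exI[of _ y]) simp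
next
  have one: "1 \<notin> p" by (rule prime_ideal_one_notin[OF p])
  fix e assume "\<exists>n s n' s'. s \<notin> p \<and> s' \<notin> p \<and> frac scale p x 1 = frac scale p n s \<and>
      frac scale p y 1 = frac scale p n' s' \<and> e = frac scale p (s' *s n + s *s n') (s * s')"
  then obtain n s n' s' where s: "s \<notin> p" "s' \<notin> p"
    and x: "frac scale p x 1 = frac scale p n s" and y: "frac scale p y 1 = frac scale p n' s'"
    and e: "e = frac scale p (s' *s n + s *s n') (s * s')" by blast
  obtain u where u: "u \<notin> p" "(u * s) *s x = u *s n" using x unfolding frac_eq_iff[OF p one s(1)] by auto
  obtain v where v: "v \<notin> p" "(v * s') *s y = v *s n'" using y unfolding frac_eq_iff[OF p one s(2)] by auto
  have "(u * v) *s (s' *s n + s *s n') = (v * s') *s (u *s n) + (u * s) *s (v *s n')"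
    by (simp add: scale_right_distrib scale_scale mult_ac)
  also have "\<dots> = (u * v * (s * s')) *s (x + y)"
    by (simp flip: u(2) v(2) add: scale_right_distrib scale_scale mult_ac)
  finally show "e = frac scale p (x + y) 1"
    unfolding e using p s one u(1) v(1)
    by (intro frac_eqI[where u = "u * v"]) (simp_all add: prime_ideal_mult_iff)
qed

lemma loc_smult_frac1:
  assumes p: "is_prime_ideal p"
  shows "loc_smult scale p r (frac scale p x 1) = frac scale p (r *s x) 1"
  unfolding loc_smult_def
proof (rule the_equality)
  show "\<exists>n s. s \<notin> p \<and> frac scale p x 1 = frac scale p n s \<and>
      frac scale p (r *s x) 1 = frac scale p (r *s n) s"
    using prime_ideal_one_notin[OF p] by (intro exI[of _ x] exI[of _ 1]) simp
next
  have one: "1 \<notin> p" by (rule prime_ideal_one_notin[OF p])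
  fix e assume "\<exists>n s. s \<notin> p \<and> frac scale p x 1 = frac scale p n s \<and> e = frac scale p (r *s n) s"
  then obtain n s where s: "s \<notin> p" and x: "frac scale p x 1 = frac scale p n s"
    and e: "e = frac scale p (r *s n) s" by blast
  obtain u where u: "u \<notin> p" "(u * s) *s x = u *s n" using x unfolding frac_eq_iff[OF p one s] by auto
  have "u *s (r *s n) = r *s (u *s n)" by (simp add: scale_scale mult.commute)
  also have "\<dots> = (u * s) *s (r *s x)" by (simp flip: u(2) add: scale_scale mult.commute)
  finally have "u *s (r *s n) = (u * s) *s (r *s x)" .
  then show "e = frac scale p (r *s x) 1"
    unfolding e using p s one u(1) by (intro frac_eqI[where u = u]) simp_all
qed

end

lemma prime_ideal_colon:
  assumes "module sM" and "P \<in> mSpec sM"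
  shows "is_prime_ideal (colon sM P)"
proof -
  interpret M: module sM by fact
  have P: "M.subspace P" "P \<noteq> UNIV" "\<And>r m. sM r m \<in> P \<Longrightarrow> r \<in> colon sM P \<or> m \<in> P"
    using assms(2) unfolding mSpec_def prime_submodule_def by blast+
  have "is_ideal (colon sM P)"
    unfolding is_ideal_def Rm.subspace_def colon_def
    using M.subspace_0[OF P(1)] M.subspace_add[OF P(1)] M.subspace_scale[OF P(1)]
    by (simp add: M.scale_left_distrib flip: M.scale_scale)
  moreover have "colon sM P \<noteq> UNIV"
  proof
    assume "colon sM P = UNIV"
    then have "sM 1 m \<in> P" for m unfolding colon_def by blast
    then show False using P(2) by auto
  qed
  moreover have "x \<in> colon sM P \<or> y \<in> colon sM P" if "x * y \<in> colon sM P" for x y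
  proof -
    have "sM x (sM y m) \<in> P" for m using that unfolding colon_def by simp
    then show ?thesis using P(3) unfolding colon_def by blast
  qed
  ultimately show ?thesis unfolding is_prime_ideal_def by blast
qed

lemma prime_ideal_eq_colon:
  fixes sM :: "'r::comm_ring_1 \<Rightarrow> 'm::ab_group_add \<Rightarrow> 'm"
  assumes "module sM" and "faithful sM" and "primeful sM" and "mSpec sM \<noteq> {}"
    and "is_prime_ideal q"
  obtains P where "P \<in> mSpec sM" and "colon sM P = q"
proof -
  interpret M: module sM by fact
  obtain P where "P \<in> mSpec sM" using assms(4) by blast
  then have P: "M.subspace P" "P \<noteq> UNIV" unfolding mSpec_def prime_submodule_def by blast+
  have "(UNIV :: 'm set) \<noteq> {0}"
  proof
    assume "(UNIV :: 'm set) = {0}"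
    then have "x = 0" for x :: 'm by (metis UNIV_I singletonD)
    then have "x \<in> P" for x using M.subspace_0[OF P(1)] by metis
    then have "P = UNIV" by blast
    with P(2) show False ..
  qed
  moreover have "ann sM \<subseteq> q"
    using assms(2) Rm.subspace_0[OF prime_ideal_subspace[OF assms(5)]] unfolding faithful_def by simp
  ultimately have "\<exists>P\<in>mSpec sM. colon sM P = q" using assms(3,5) unfolding primeful_def by simp
  then show ?thesis using that by blast
qed

lemma Supp_prime_ideal:
  assumes "module sM" and "U \<subseteq> mSpec sM" and "p \<in> Supp sM U"
  shows "is_prime_ideal p"
  using assms prime_ideal_colon unfolding Supp_def by blast

lemma Supp_complement_zV_iff:
  fixes sM :: "'r::comm_ring_1 \<Rightarrow> 'm::ab_group_add \<Rightarrow> 'm"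
  assumes "module sM" and "faithful sM" and "primeful sM" and "mSpec sM \<noteq> {}"
  shows "p \<in> Supp sM (mSpec sM - zV sM K) \<longleftrightarrow> is_prime_ideal p \<and> \<not> colon sM K \<subseteq> p"
proof
  assume "p \<in> Supp sM (mSpec sM - zV sM K)"
  then obtain P where "P \<in> mSpec sM" "P \<notin> zV sM K" "p = colon sM P"
    unfolding Supp_def by blast
  then show "is_prime_ideal p \<and> \<not> colon sM K \<subseteq> p"
    using prime_ideal_colon[OF assms(1)] unfolding zV_def by blast
next
  assume p: "is_prime_ideal p \<and> \<not> colon sM K \<subseteq> p"
  then obtain P where "P \<in> mSpec sM" "colon sM P = p"
    using prime_ideal_eq_colon[OF assms] by blast
  with p show "p \<in> Supp sM (mSpec sM - zV sM K)"
    unfolding Supp_def zV_def by blast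
qed

lemma sections_locally_frac:
  fixes sM :: "'r::comm_ring_1 \<Rightarrow> 'm::ab_group_add \<Rightarrow> 'm" and sN :: "'r \<Rightarrow> 'n::ab_group_add \<Rightarrow> 'n"
  assumes "module sM" and "faithful sM" and "primeful sM" and "mSpec sM \<noteq> {}"
    and "module sN" and "\<gamma> \<in> sections sM sN U"
  shows "module.locally_frac sN (Supp sM U) \<gamma>"
  unfolding module.locally_frac_def[OF assms(5)]
proof
  interpret N: module sN by fact
  fix p assume "p \<in> Supp sM U"
  then obtain Q where Q: "Q \<in> U" and p: "p = colon sM Q" unfolding Supp_def by blast
  then obtain W s n where W: "zopen sM W" "W \<subseteq> U" "Q \<in> W"
    and sn: "\<forall>P\<in>W. s \<notin> colon sM P \<and> \<gamma> (colon sM P) = frac sN (colon sM P) n s"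
    using assms(6) unfolding sections_def by blast
  obtain L where L: "W = mSpec sM - zV sM L" using W(1) unfolding zopen_def by blast
  obtain c where c: "c \<in> colon sM L" "c \<notin> p" using W(3) unfolding L zV_def p by blast
  have "is_prime_ideal p" using W(3) unfolding L p by (blast intro: prime_ideal_colon[OF assms(1)])
  then have "c * s \<notin> p" using c(2) sn W(3) p by (simp add: prime_ideal_mult_iff)
  moreover have "N.frac_rep \<gamma> (c * s) (sN c n)"
    unfolding N.frac_rep_def
  proof (intro allI impI, elim conjE)
    fix q assume q: "is_prime_ideal q" "c * s \<notin> q"
    then have cq: "c \<notin> q" and sq: "s \<notin> q" by (simp_all add: prime_ideal_mult_iff)
    obtain P where P: "P \<in> mSpec sM" "colon sM P = q"
      by (rule prime_ideal_eq_colon[OF assms(1-4) q(1)])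
    then have "P \<in> W" using c(1) cq unfolding L zV_def by blast
    then have "\<gamma> q = frac sN q n s" using sn P(2) by blast
    also have "\<dots> = frac sN q (sN c n) (c * s)"
      using q sq prime_ideal_one_notin[OF q(1)]
      by (intro N.frac_eqI[where u = 1]) (simp_all add: N.scale_scale mult_ac)
    finally show "\<gamma> q = frac sN q (sN c n) (c * s)" .
  qed
  ultimately show "\<exists>f m. f \<notin> p \<and> N.frac_rep \<gamma> f m" by blast
qed

definition canonical_section ::
  "('r::comm_ring_1 \<Rightarrow> 'm::ab_group_add \<Rightarrow> 'm) \<Rightarrow> ('r \<Rightarrow> 'n::ab_group_add \<Rightarrow> 'n) \<Rightarrow> 'm set set \<Rightarrow>
   'n \<Rightarrow> 'r set \<Rightarrow> ('n \<times> 'r) set" where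
  "canonical_section sM sN U x = restrict (\<lambda>p. frac sN p x 1) (Supp sM U)"

lemma canonical_section_in_sections:
  assumes "module sM" and "zopen sM U"
  shows "canonical_section sM sN U x \<in> sections sM sN U"
proof -
  have U: "U \<subseteq> mSpec sM" using assms(2) unfolding zopen_def by blast
  have one: "1 \<notin> p" if "p \<in> Supp sM U" for p
    using prime_ideal_one_notin Supp_prime_ideal[OF assms(1) U that] by blast
  have "canonical_section sM sN U x \<in> (\<Pi>\<^sub>E p\<in>Supp sM U. loc sN p)"
    unfolding canonical_section_def loc_def using one by auto
  moreover have "canonical_section sM sN U x (colon sM P) = frac sN (colon sM P) x 1" if "P \<in> U" for P
    using that unfolding canonical_section_def Supp_def by simp
  moreover have "1 \<notin> colon sM P" if "P \<in> U" for P
    using one that unfolding Supp_def by blast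
  ultimately show ?thesis
    unfolding sections_def using assms(2) by blast
qed

lemma canonical_section_add:
  assumes "module sM" and "module sN" and "U \<subseteq> mSpec sM"
  shows "canonical_section sM sN U (x + y) =
    sec_add sM sN U (canonical_section sM sN U x) (canonical_section sM sN U y)"
  using module.loc_add_frac1[OF assms(2) Supp_prime_ideal[OF assms(1,3)]]
  unfolding canonical_section_def sec_add_def restrict_def by (intro ext) simp

lemma canonical_section_smult:
  assumes "module sM" and "module sN" and "U \<subseteq> mSpec sM"
  shows "canonical_section sM sN U (sN r x) = sec_smult sM sN U r (canonical_section sM sN U x)"
  using module.loc_smult_frac1[OF assms(2) Supp_prime_ideal[OF assms(1,3)]]
  unfolding canonical_section_def sec_smult_def restrict_def by (intro ext) simp

lemma canonical_section_inj:
  assumes "module sN" and a: "\<And>x. sN a x = 0 \<Longrightarrow> x = 0"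
    and "\<And>q. is_prime_ideal q \<Longrightarrow> a \<notin> q \<Longrightarrow> q \<in> Supp sM U"
  shows "inj (canonical_section sM sN U)"
proof (rule injI)
  fix x y assume eq: "canonical_section sM sN U x = canonical_section sM sN U y"
  have "frac sN p x 1 = frac sN p y 1" if "is_prime_ideal p" "a \<notin> p" for p
    using fun_cong[OF eq, of p] assms(3)[OF that] unfolding canonical_section_def by simp
  with a show "x = y" by (rule module.frac1_inj[OF assms(1)])
qed

lemma sections_eq_canonical_section:
  fixes sM :: "'r::comm_ring_1 \<Rightarrow> 'm::ab_group_add \<Rightarrow> 'm" and sN :: "'r \<Rightarrow> 'n::ab_group_add \<Rightarrow> 'n"
  assumes "module sM" and "faithful sM" and "primeful sM" and "mSpec sM \<noteq> {}" and "module sN"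
    and a: "\<And>x. sN a x = 0 \<Longrightarrow> x = 0"
    and b: "\<And>x. sN b x \<in> range (sN a) \<Longrightarrow> x \<in> range (sN a)"
    and "a \<in> colon sM K" and "b \<in> colon sM K"
    and \<gamma>: "\<gamma> \<in> sections sM sN (mSpec sM - zV sM K)"
  shows "\<gamma> \<in> range (canonical_section sM sN (mSpec sM - zV sM K))"
proof -
  interpret N: module sN by fact
  let ?S = "Supp sM (mSpec sM - zV sM K)"
  have S: "p \<in> ?S \<longleftrightarrow> is_prime_ideal p \<and> \<not> colon sM K \<subseteq> p" for p
    by (rule Supp_complement_zV_iff[OF assms(1-4)])
  have loc: "N.locally_frac ?S \<gamma>" by (rule sections_locally_frac[OF assms(1-5) \<gamma>])
  have prime: "\<forall>p\<in>?S. is_prime_ideal p" using S by blast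
  have Da: "q \<in> ?S" if "is_prime_ideal q" "a \<notin> q" for q using S that assms(8) by blast
  have Db: "q \<in> ?S" if "is_prime_ideal q" "b \<notin> q" for q using S that assms(9) by blast
  obtain z where z: "\<forall>p\<in>?S. \<gamma> p = frac sN p z 1"
    using a b loc prime Da Db by (rule N.locally_frac_eq_frac1_depth_two)
  have "\<gamma> = canonical_section sM sN (mSpec sM - zV sM K) z"
  proof
    fix p
    show "\<gamma> p = canonical_section sM sN (mSpec sM - zV sM K) z p"
      using z PiE_arb[of \<gamma> ?S "loc sN" p] \<gamma> unfolding canonical_section_def sections_def by auto
  qed
  then show ?thesis by blast
qed

theorem corollary3p18:
  fixes sM :: "'r::comm_ring_1 \<Rightarrow> 'm::ab_group_add \<Rightarrow> 'm"
    and sN :: "'r \<Rightarrow> 'n::ab_group_add \<Rightarrow> 'n"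
    and K :: "'m set" and a1 a2 :: 'r
  assumes "noetherian_ring TYPE('r)"
    and "module sM" and "module sN"
    and "faithful sM" and "primeful sM" and "mSpec sM \<noteq> {}"
    and "Modules.module.subspace sM K"
    and "a1 \<in> colon sM K" and "a2 \<in> colon sM K" and "N_sequence2 sN a1 a2"
  shows "\<exists>\<phi>. bij_betw \<phi> (UNIV :: 'n set) (sections sM sN (mSpec sM - zV sM K)) \<and>
           (\<forall>x y. \<phi> (x + y) = sec_add sM sN (mSpec sM - zV sM K) (\<phi> x) (\<phi> y)) \<and>
           (\<forall>r x. \<phi> (sN r x) = sec_smult sM sN (mSpec sM - zV sM K) r (\<phi> x))"
proof -
  let ?U = "mSpec sM - zV sM K"
  let ?\<phi> = "canonical_section sM sN ?U"
  have a1: "\<And>x. sN a1 x = 0 \<Longrightarrow> x = 0"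
    and a2: "\<And>x. sN a2 x \<in> range (sN a1) \<Longrightarrow> x \<in> range (sN a1)"
    using assms(10) unfolding N_sequence2_def by blast+
  have "q \<in> Supp sM ?U" if "is_prime_ideal q" "a1 \<notin> q" for q
    using that assms(8) Supp_complement_zV_iff[OF assms(2,4-6)] by blast
  with assms(3) a1 have "inj ?\<phi>" by (rule canonical_section_inj)
  moreover have "zopen sM ?U" unfolding zopen_def using assms(7) by blast
  then have "range ?\<phi> = sections sM sN ?U"
    using canonical_section_in_sections[OF assms(2)]
      sections_eq_canonical_section[OF assms(2,4-6,3) a1 a2 assms(8,9)] by blast
  ultimately have "bij_betw ?\<phi> UNIV (sections sM sN ?U)" unfolding bij_betw_def by blast
  moreover have "?U \<subseteq> mSpec sM" by blast
  ultimately show ?thesis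
    using canonical_section_add[OF assms(2,3)] canonical_section_smult[OF assms(2,3)] by blast
qed

end
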